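(* Let $A$ be a principal ideal domain and let $a=(a_b)_{b\neq0}\in A^\omega$. Let $d$ be a nonzero element of $A$ such that $a_d\equiv0\bmod d$. Then there is $q\in A^\omega$ with $a=d\,q$.
   Context: For a principal ideal domain $A$, $A^\omega$ is the ring whose elements are represented by families $(a_d)_{d\in A\setminus\{0\}}$ of elements of $A$ such that $d\mid e\Rightarrow a_d\equiv a_e\bmod d$ for all nonzero $d,e$; two families $(a_d)$, $(b_d)$ represent the same element iff $a_d\equiv b_d\bmod d$ for all $d\ne0$; operations are componentwise. $A$ is embedded in $A^\omega$ via constant families. *)

theory Defs
  imports Main
begin

definition is_ideal :: "'a::comm_ring_1 set \<Rightarrow> bool" where
  "is_ideal I \<longleftrightarrow> 0 \<in> I \<and> (\<forall>x\<in>I. \<forall>y\<in>I. x + y \<in> I) \<and> (\<forall>r. \<forall>x\<in>I. r * x \<in> I)"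

definition is_pid :: "'a::idom itself \<Rightarrow> bool" where
  "is_pid _ \<longleftrightarrow> (\<forall>I::'a set. is_ideal I \<longrightarrow> (\<exists>g. I = {g * x | x. True}))"

text \<open>Representatives of elements of A^omega: families indexed by nonzero elements
  (values at 0 are irrelevant) satisfying the compatibility condition.\<close>
definition omega_family :: "('a::idom \<Rightarrow> 'a) \<Rightarrow> bool" where
  "omega_family a \<longleftrightarrow> (\<forall>d e. d \<noteq> 0 \<longrightarrow> e \<noteq> 0 \<longrightarrow> d dvd e \<longrightarrow> d dvd (a d - a e))"

text \<open>Two families represent the same element of A^omega.\<close>
definition omega_eq :: "('a::idom \<Rightarrow> 'a) \<Rightarrow> ('a \<Rightarrow> 'a) \<Rightarrow> bool" where
  "omega_eq a b \<longleftrightarrow> (\<forall>d. d \<noteq> 0 \<longrightarrow> d dvd (a d - b d))"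

end

theory Submission
  imports Defs
begin

text \<open>The quotient is \<open>q\<^sub>b = a\<^sub>b\<^sub>d / d\<close>: compatibility of \<open>a\<close> at \<open>d dvd b d\<close> transports
  \<open>d dvd a\<^sub>d\<close> to \<open>d dvd a\<^sub>b\<^sub>d\<close>, compatibility at \<open>b d dvd e d\<close> gives that of \<open>q\<close> after
  cancelling \<open>d\<close>, and compatibility at \<open>b dvd b d\<close> gives \<open>a\<^sub>b \<equiv> d q\<^sub>b mod b\<close>.\<close>

lemma omega_family_dvd_mult_index:
  assumes "omega_family a" "d \<noteq> 0" "d dvd a d" "b \<noteq> 0"
  shows "d dvd a (b * d)"
proof -
  have "d dvd a d - a (b * d)"
    using assms unfolding omega_family_def by simp
  with \<open>d dvd a d\<close> have "d dvd a d - (a d - a (b * d))"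
    by (rule dvd_diff)
  then show ?thesis
    by simp
qed

lemma omega_family_quotient:
  assumes "omega_family a" "d \<noteq> 0"
    and q: "\<And>b. b \<noteq> 0 \<Longrightarrow> a (b * d) = d * q b"
  shows "omega_family q"
  unfolding omega_family_def
proof (intro allI impI)
  fix b e :: 'a
  assume "b \<noteq> 0" "e \<noteq> 0" "b dvd e"
  then have "b * d dvd a (b * d) - a (e * d)"
    using assms(1,2) unfolding omega_family_def by simp
  moreover have "a (b * d) - a (e * d) = d * (q b - q e)"
    using q \<open>b \<noteq> 0\<close> \<open>e \<noteq> 0\<close> by (simp add: right_diff_distrib)
  ultimately have "d * b dvd d * (q b - q e)"
    by (simp add: mult.commute[of b d])
  then show "b dvd q b - q e"
    using \<open>d \<noteq> 0\<close> by simp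
qed

lemma omega_eq_mult_quotient:
  assumes "omega_family a" "d \<noteq> 0"
    and q: "\<And>b. b \<noteq> 0 \<Longrightarrow> a (b * d) = d * q b"
  shows "omega_eq a (\<lambda>b. d * q b)"
  unfolding omega_eq_def
proof (intro allI impI)
  fix b :: 'a
  assume "b \<noteq> 0"
  then have "b dvd a b - a (b * d)"
    using assms(1,2) unfolding omega_family_def by simp
  then show "b dvd a b - d * q b"
    using q \<open>b \<noteq> 0\<close> by simp
qed

theorem mainTheorem9:
  fixes a :: "'a::idom \<Rightarrow> 'a" and d :: "'a"
  assumes "is_pid TYPE('a)"
    and "omega_family a"
    and "d \<noteq> 0"
    and "d dvd a d"
  shows "\<exists>q. omega_family q \<and> omega_eq a (\<lambda>b. d * q b)"
proof -
  have "\<forall>b. \<exists>r. b \<noteq> 0 \<longrightarrow> a (b * d) = d * r"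
    using omega_family_dvd_mult_index[OF assms(2-4)] by (auto elim!: dvdE)
  then obtain q where q: "\<And>b. b \<noteq> 0 \<Longrightarrow> a (b * d) = d * q b"
    by (metis choice)
  show ?thesis
    using omega_family_quotient[OF assms(2,3) q] omega_eq_mult_quotient[OF assms(2,3) q]
    by blast
qed

end
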